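(* Let $\alpha\in\mathbb{R}\setminus\{0\}$, $\vartheta\in(0,\pi)$, and let $k>0$ with $k\notin\mathbb{N}$. Put $g(k)=\cos k\pi+\frac{\alpha}{4k}\sin k\pi$ and assume $|g(k)|\ge1$. Define $$f(k)=-\cos k\pi+\frac{\sin^2 k\pi}{\frac{\alpha}{4k}\sin k\pi\pm\sqrt{g(k)^2-1}},$$ where the sign $\pm$ is the sign of $g(k)$. Then: (a) The equation $\cos k\vartheta=f(k)$ (the eigenvalue condition for $H^+$) holds if and only if $$\frac{\alpha}{2k}(1+\cos k\vartheta\cos k\pi)(\cos k\vartheta+\cos k\pi)=\sin k\pi\,(1+2\cos k\vartheta\cos k\pi+\cos^2 k\vartheta).$$ (b) The equation $-\cos k\vartheta=f(k)$ (the eigenvalue condition for $H^-$) holds if and only if $$\frac{\alpha}{2k}(1-\cos k\vartheta\cos k\pi)(-\cos k\vartheta+\cos k\pi)=\sin k\pi\,(1-2\cos k\vartheta\cos k\pi+\cos^2 k\vartheta).$$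
   Context: For non-integer $k>0$ with $|g(k)|\ge1$, the number $k^2$ is an eigenvalue of the even (resp. odd) part $H^+$ (resp. $H^-$) of the bent chain Hamiltonian if and only if $\cos k\vartheta=f(k)$ (resp. $-\cos k\vartheta=f(k)$). Here the bent chain is a chain of rings of circumference $2\pi$ coupled by $\delta$-couplings of strength $\alpha$ at the touching points, with one ring split into arcs of lengths $\pi\pm\vartheta$. The claim is a purely analytic equivalence of the two displayed equations. *)

theory Defs
  imports "HOL-Analysis.Analysis"
begin

definition g_fun :: "real \<Rightarrow> real \<Rightarrow> real" where
  "g_fun \<alpha> k = cos (k * pi) + \<alpha> / (4 * k) * sin (k * pi)"

definition f_fun :: "real \<Rightarrow> real \<Rightarrow> real" where
  "f_fun \<alpha> k = - cos (k * pi) + (sin (k * pi))^2 /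
      (\<alpha> / (4 * k) * sin (k * pi) + sgn (g_fun \<alpha> k) * sqrt ((g_fun \<alpha> k)^2 - 1))"

end

theory Submission
  imports Defs
begin

text \<open>
  Write \<open>c = cos k\<pi>\<close>, \<open>s = sin k\<pi> \<noteq> 0\<close>, \<open>b = \<alpha>/(4k)\<close> and \<open>g = c + b s\<close>. The denominator in
  \<open>f(k)\<close> is \<open>l - c\<close>, where \<open>l = g \<plusminus> sqrt (g\<^sup>2 - 1)\<close> is the root of \<open>\<lambda>\<^sup>2 - 2 g \<lambda> + 1\<close> of
  modulus at least one. Since \<open>s\<^sup>2 = 1 - c\<^sup>2\<close>, the equation \<open>x = f(k)\<close> says \<open>(x + c) l = 1 + x c\<close>,
  while the displayed trigonometric equation says, after multiplication by \<open>s\<close>, that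
  \<open>(1 + x c)\<^sup>2 - 2 g (x + c)(1 + x c) + (x + c)\<^sup>2 = 0\<close>. The latter factors as
  \<open>(1 + x c - l (x + c)) (1 + x c - (x + c)/l)\<close>, and for \<open>\<bar>x\<bar> \<le> 1\<close> the second factor can only
  vanish when \<open>l = 1/l\<close>, because \<open>\<bar>x + c\<bar> \<le> \<bar>1 + x c\<bar>\<close>.
\<close>

definition dominant_root :: "real \<Rightarrow> real" where
  "dominant_root g = g + sgn g * sqrt (g\<^sup>2 - 1)"

lemma dominant_root_quadratic:
  assumes "\<bar>g\<bar> \<ge> 1"
  shows "(dominant_root g)\<^sup>2 - 2 * g * dominant_root g + 1 = 0"
proof -
  have "g\<^sup>2 \<ge> 1" using assms abs_le_square_iff[of 1 g] by simp
  have "(sgn g)\<^sup>2 = 1" using assms by (cases "g > 0") auto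
  have "(g + sgn g * sqrt (g\<^sup>2 - 1))\<^sup>2 - 2 * g * (g + sgn g * sqrt (g\<^sup>2 - 1)) + 1
      = (sgn g)\<^sup>2 * (sqrt (g\<^sup>2 - 1))\<^sup>2 - g\<^sup>2 + 1"
    by (simp add: power2_eq_square algebra_simps)
  also have "\<dots> = 0" using \<open>(sgn g)\<^sup>2 = 1\<close> \<open>g\<^sup>2 \<ge> 1\<close> by simp
  finally show ?thesis unfolding dominant_root_def .
qed

lemma abs_dominant_root_ge_one:
  assumes "\<bar>g\<bar> \<ge> 1"
  shows "\<bar>dominant_root g\<bar> \<ge> 1"
proof -
  have "g\<^sup>2 \<ge> 1" using assms abs_le_square_iff[of 1 g] by simp
  then have r: "0 \<le> sqrt (g\<^sup>2 - 1)" by simp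
  show ?thesis
  proof (cases "g > 0")
    case True
    then have "dominant_root g = g + sqrt (g\<^sup>2 - 1)" by (simp add: dominant_root_def)
    then show ?thesis using assms True r by linarith
  next
    case False
    then have "dominant_root g = g - sqrt (g\<^sup>2 - 1)" using assms by (simp add: dominant_root_def sgn_if)
    then show ?thesis using assms False r by linarith
  qed
qed

lemma homogeneous_quadratic_root_iff:
  fixes g l y z :: real
  assumes quadratic: "l\<^sup>2 - 2 * g * l + 1 = 0" and "\<bar>l\<bar> \<ge> 1" and "\<bar>y\<bar> \<le> \<bar>z\<bar>"
  shows "z = l * y \<longleftrightarrow> z\<^sup>2 - 2 * g * y * z + y\<^sup>2 = 0"
proof -
  define l' where "l' = 2 * g - l"
  have "l * l' = 1" using quadratic unfolding l'_def by algebra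
  have factor: "z\<^sup>2 - 2 * g * y * z + y\<^sup>2 = (z - l * y) * (z - l' * y)"
    using \<open>l * l' = 1\<close> unfolding l'_def by algebra
  have "z = l * y" if "z = l' * y"
  proof (cases "y = 0")
    case False
    have "\<bar>l\<bar> * \<bar>l'\<bar> = 1" using \<open>l * l' = 1\<close> by (simp flip: abs_mult)
    then have "\<bar>l'\<bar> \<le> 1" using mult_right_mono[OF \<open>\<bar>l\<bar> \<ge> 1\<close> abs_ge_zero[of l']] by simp
    moreover have "\<bar>l'\<bar> * \<bar>y\<bar> \<ge> \<bar>y\<bar>" using \<open>\<bar>y\<bar> \<le> \<bar>z\<bar>\<close> that by (simp add: abs_mult)
    ultimately have "\<bar>l'\<bar> = 1" using False by (simp add: mult_le_cancel_right1)
    then have "l' = 1 \<or> l' = - 1" by linarith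
    then have "l' = l" using \<open>l * l' = 1\<close> by auto
    then show ?thesis using that by simp
  qed (use that in simp)
  then show ?thesis unfolding factor by auto
qed

lemma abs_add_le_abs_one_add_mult:
  fixes x c :: real
  assumes "\<bar>x\<bar> \<le> 1" and "\<bar>c\<bar> \<le> 1"
  shows "\<bar>x + c\<bar> \<le> \<bar>1 + x * c\<bar>"
proof -
  have "(1 + x * c)\<^sup>2 - (x + c)\<^sup>2 = (1 - x\<^sup>2) * (1 - c\<^sup>2)" by (simp add: power2_eq_square algebra_simps)
  moreover have "x\<^sup>2 \<le> 1" "c\<^sup>2 \<le> 1" using assms by (simp_all add: abs_square_le_1)
  ultimately have "(x + c)\<^sup>2 \<le> (1 + x * c)\<^sup>2" by (smt (verit) mult_nonneg_nonneg)
  then show ?thesis by (simp add: abs_le_square_iff)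
qed

lemma sin_pi_mult_neq_zero:
  assumes "k \<notin> \<int>"
  shows "sin (k * pi) \<noteq> 0"
  using assms by (auto simp: sin_zero_iff_int2)

lemma eigenvalue_condition_iff:
  fixes c s b x :: real
  assumes "s \<noteq> 0" and "c\<^sup>2 + s\<^sup>2 = 1" and "\<bar>x\<bar> \<le> 1" and g: "\<bar>c + b * s\<bar> \<ge> 1"
  shows "x = - c + s\<^sup>2 / (b * s + sgn (c + b * s) * sqrt ((c + b * s)\<^sup>2 - 1))
     \<longleftrightarrow> 2 * b * (1 + x * c) * (x + c) = s * (1 + 2 * x * c + x\<^sup>2)"
proof -
  define l where "l = dominant_root (c + b * s)"
  have denominator: "b * s + sgn (c + b * s) * sqrt ((c + b * s)\<^sup>2 - 1) = l - c"
    unfolding l_def dominant_root_def by simp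
  have "c\<^sup>2 < 1" using assms(1,2) by (smt (verit) zero_less_power2)
  then have "\<bar>c\<bar> < 1" by (simp add: abs_square_less_1)
  then have "l \<noteq> c" using abs_dominant_root_ge_one[OF g] unfolding l_def by auto
  have "x = - c + s\<^sup>2 / (l - c) \<longleftrightarrow> x + c = s\<^sup>2 / (l - c)" by linarith
  also have "\<dots> \<longleftrightarrow> (x + c) * (l - c) = s\<^sup>2"
    using \<open>l \<noteq> c\<close> by (simp add: eq_divide_eq)
  also have "\<dots> \<longleftrightarrow> 1 + x * c = l * (x + c)"
  proof -
    have "(x + c) * (l - c) - s\<^sup>2 = l * (x + c) - (1 + x * c)" using assms(2) by algebra
    then show ?thesis by linarith
  qed
  also have "\<dots> \<longleftrightarrow> (1 + x * c)\<^sup>2 - 2 * (c + b * s) * (x + c) * (1 + x * c) + (x + c)\<^sup>2 = 0"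
    unfolding l_def using \<open>\<bar>x\<bar> \<le> 1\<close> \<open>\<bar>c\<bar> < 1\<close>
    by (intro homogeneous_quadratic_root_iff dominant_root_quadratic abs_dominant_root_ge_one g
        abs_add_le_abs_one_add_mult) simp_all
  also have "\<dots> \<longleftrightarrow> s * (s * (1 + 2 * x * c + x\<^sup>2) - 2 * b * (1 + x * c) * (x + c)) = 0"
  proof -
    have "(1 + x * c)\<^sup>2 - 2 * (c + b * s) * (x + c) * (1 + x * c) + (x + c)\<^sup>2
        = s * (s * (1 + 2 * x * c + x\<^sup>2) - 2 * b * (1 + x * c) * (x + c))"
      using assms(2) by algebra
    then show ?thesis by (simp only:)
  qed
  also have "\<dots> \<longleftrightarrow> 2 * b * (1 + x * c) * (x + c) = s * (1 + 2 * x * c + x\<^sup>2)"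
    using \<open>s \<noteq> 0\<close> by (metis eq_iff_diff_eq_0 mult_eq_0_iff)
  finally show ?thesis unfolding denominator .
qed

theorem proposition4p1:
  fixes \<alpha> \<theta> k :: real
  assumes "\<alpha> \<noteq> 0" and "0 < \<theta>" and "\<theta> < pi"
    and "0 < k" and "k \<notin> \<nat>"
    and "\<bar>g_fun \<alpha> k\<bar> \<ge> 1"
  shows "(cos (k * \<theta>) = f_fun \<alpha> k \<longleftrightarrow>
           \<alpha> / (2 * k) * (1 + cos (k * \<theta>) * cos (k * pi)) * (cos (k * \<theta>) + cos (k * pi))
           = sin (k * pi) * (1 + 2 * cos (k * \<theta>) * cos (k * pi) + (cos (k * \<theta>))^2))
       \<and> (- cos (k * \<theta>) = f_fun \<alpha> k \<longleftrightarrow>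
           \<alpha> / (2 * k) * (1 - cos (k * \<theta>) * cos (k * pi)) * (- cos (k * \<theta>) + cos (k * pi))
           = sin (k * pi) * (1 - 2 * cos (k * \<theta>) * cos (k * pi) + (cos (k * \<theta>))^2))"
proof -
  have "k \<notin> \<int>"
    using \<open>0 < k\<close> \<open>k \<notin> \<nat>\<close> by (metis Ints_cases of_int_0_less_iff of_nat_nat of_nat_in_Nats less_imp_le)
  then have "sin (k * pi) \<noteq> 0" by (rule sin_pi_mult_neq_zero)
  moreover have "\<bar>cos (k * pi) + \<alpha> / (4 * k) * sin (k * pi)\<bar> \<ge> 1"
    using \<open>\<bar>g_fun \<alpha> k\<bar> \<ge> 1\<close> by (simp add: g_fun_def)
  ultimately have condition: "\<bar>x\<bar> \<le> 1 \<Longrightarrow>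
      x = f_fun \<alpha> k \<longleftrightarrow> \<alpha> / (2 * k) * (1 + x * cos (k * pi)) * (x + cos (k * pi))
        = sin (k * pi) * (1 + 2 * x * cos (k * pi) + x\<^sup>2)" for x
    using eigenvalue_condition_iff[of "sin (k * pi)" "cos (k * pi)" x "\<alpha> / (4 * k)"]
    unfolding f_fun_def g_fun_def by simp
  show ?thesis
    using condition[of "cos (k * \<theta>)"] condition[of "- cos (k * \<theta>)"] by simp
qed

end
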